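(* Fix $c\neq0$. For $m\in[0,1)$, the cnoidal profile $p_{m,V}$ has zero average, $\int_0^{2\pi}p_{m,V}(x)\,dx=0$, if and only if $V=V_0(m):=\frac{2E(m)}{K(m)}-\frac{4-2m}{3}$. Let $m^*\in(0,1)$ be the solution of $E(m^* )/K(m^* )=\frac12$ ($m^*\approx0.8261$). Then the point $(m,V_0(m))$ satisfies $V_0(m)>-\frac{m+1}{3}$ for all $m\in[0,1)$, $V_0(m)=\frac{2m-1}{3}$ exactly when $m=m^*$, and $V_0(m)<\frac{2m-1}{3}$ (so that $(m,V_0(m))$ lies in the region $-\frac{m+1}{3}<V<\frac{2m-1}{3}$, where the profile is not Virasoro-conjugate to any constant) for $m\in(m^*,1)$.
   Context: $K(m)=\int_0^{\pi/2}(1-m\sin^2\theta)^{-1/2}d\theta$ and $E(m)=\int_0^{\pi/2}(1-m\sin^2\theta)^{1/2}d\theta$ are the complete elliptic integrals of the first and second kind. The cnoidal profile is $p_{m,V}(x)=\frac{cK(m)^2}{3\pi^2}\big[\frac V2-\frac{m+1}3+m\,\mathrm{sn}^2(\frac{K(m)}{\pi}x|m)\big]$ with $\mathrm{sn}(\cdot|m)$ the Jacobi elliptic sine. A $2\pi$-periodic profile $p$ is Virasoro-conjugate to a constant $k$ if $p=f\cdot k$ for some smooth $f:\mathbb{R}\to\mathbb{R}$ with $f'>0$ and $f(x+2\pi)=f(x)+2\pi$, where $(f\cdot q)(f(x))=f'(x)^{-2}[q(x)+\frac c{12}\mathsf{S}[f](x)]$ and $\mathsf{S}[f]=\frac{f'''}{f'}-\frac32(\frac{f''}{f'})^2$.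 *)

theory Defs
  imports "HOL-Analysis.Analysis"
begin

definition ellK :: "real \<Rightarrow> real" where
  "ellK m = integral {0..pi/2} (\<lambda>\<theta>. 1 / sqrt (1 - m * (sin \<theta>)^2))"

definition ellE :: "real \<Rightarrow> real" where
  "ellE m = integral {0..pi/2} (\<lambda>\<theta>. sqrt (1 - m * (sin \<theta>)^2))"

definition ellF :: "real \<Rightarrow> real \<Rightarrow> real" where
  "ellF m \<phi> = (if 0 \<le> \<phi> then integral {0..\<phi>} (\<lambda>\<theta>. 1 / sqrt (1 - m * (sin \<theta>)^2))
               else - integral {\<phi>..0} (\<lambda>\<theta>. 1 / sqrt (1 - m * (sin \<theta>)^2)))"

text \<open>Jacobi amplitude: the inverse of phi \<mapsto> F(phi|m) (a bijection of the reals for m < 1).\<close>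
definition jacobi_am :: "real \<Rightarrow> real \<Rightarrow> real" where
  "jacobi_am m u = (THE \<phi>. ellF m \<phi> = u)"

definition jacobi_sn :: "real \<Rightarrow> real \<Rightarrow> real" where
  "jacobi_sn m u = sin (jacobi_am m u)"

definition cnoidal :: "real \<Rightarrow> real \<Rightarrow> real \<Rightarrow> real \<Rightarrow> real" where
  "cnoidal c m V x = c * (ellK m)^2 / (3 * pi^2) *
     (V / 2 - (m + 1) / 3 + m * (jacobi_sn m (ellK m / pi * x))^2)"

definition V0 :: "real \<Rightarrow> real" where
  "V0 m = 2 * ellE m / ellK m - (4 - 2 * m) / 3"

end

theory Submission
  imports Defs
begin

(*
  Substituting x = pi F(t|m) / K(m), i.e. t = am(K x / pi), turns
  int_0^{2 pi} sn^2(K x / pi) dx into (pi / K) int_0^pi sin^2 t / sqrt(1 - m sin^2 t) dt,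
  and m times the latter integral is 2 (K - E).  Hence
  int_0^{2 pi} p_{m,V} = c K^2 (V - V0 m) / (3 pi).

  Since V0 m - (2m - 1)/3 = (2E - K)/K, everything about the line V = (2m - 1)/3 is a
  statement about the sign of 2E - K.  This function is strictly decreasing in m,
  because pointwise a |-> 2a - 1/a grows faster than a^2 on (0,1]; it equals pi/2 at
  m = 0 and is negative near m = 1, where K(r^2) >= artanh r / r exceeds pi >= 2E.
  The lower bound V0 m > -(m + 1)/3 is the estimate E >= (1 - m) K.
*)

lemma elliptic_radicand_pos:
  fixes m t :: real
  assumes "m < 1"
  shows "0 < 1 - m * (sin t)^2"
proof (cases "0 \<le> m")
  case True
  then have "m * (sin t)^2 \<le> m"
    using abs_sin_le_one[of t] by (simp add: mult_left_le abs_square_le_1)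
  then show ?thesis using assms by linarith
next
  case False
  then have "m * (sin t)^2 \<le> 0" by (simp add: mult_nonpos_nonneg)
  then show ?thesis by linarith
qed

definition ell_weight :: "real \<Rightarrow> real \<Rightarrow> real" where
  "ell_weight m t = 1 / sqrt (1 - m * (sin t)^2)"

lemma ellK_conv_integral_ell_weight: "ellK m = integral {0..pi/2} (ell_weight m)"
  by (simp add: ellK_def ell_weight_def[abs_def])

lemma ellF_conv_integral_ell_weight: "0 \<le> p \<Longrightarrow> ellF m p = integral {0..p} (ell_weight m)"
  by (simp add: ellF_def ell_weight_def[abs_def])

lemma continuous_on_ell_weight: "m < 1 \<Longrightarrow> continuous_on S (ell_weight m)"
  unfolding ell_weight_def[abs_def]
  by (intro continuous_intros ballI)
     (metis elliptic_radicand_pos less_irrefl real_sqrt_eq_zero_cancel_iff)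

lemma ell_weight_integrable: "m < 1 \<Longrightarrow> ell_weight m integrable_on {a..b}"
  by (intro integrable_continuous_interval continuous_on_ell_weight)

lemma ell_weight_ge_one:
  assumes "0 \<le> m" "m < 1"
  shows "1 \<le> ell_weight m t"
proof -
  have "0 < 1 - m * (sin t)^2" "1 - m * (sin t)^2 \<le> 1"
    using elliptic_radicand_pos assms by auto
  then show ?thesis by (simp add: ell_weight_def)
qed

lemma integral_ell_weight_ge_length:
  assumes "0 \<le> m" "m < 1" "a \<le> b"
  shows "b - a \<le> integral {a..b} (ell_weight m)"
proof -
  have "integral {a..b} (\<lambda>_. 1) \<le> integral {a..b} (ell_weight m)"
    using assms by (intro integral_le ell_weight_integrable ell_weight_ge_one) auto
  then show ?thesis using assms by simp
qed

lemma ellK_ge_pi_half: "0 \<le> m \<Longrightarrow> m < 1 \<Longrightarrow> pi / 2 \<le> ellK m"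
  using integral_ell_weight_ge_length[of m 0 "pi/2"] by (simp add: ellK_conv_integral_ell_weight)

lemma ellK_pos: "0 \<le> m \<Longrightarrow> m < 1 \<Longrightarrow> 0 < ellK m"
  using ellK_ge_pi_half[of m] pi_gt_zero by linarith

lemma integral_symmetric_about_pi_half:
  fixes f :: "real \<Rightarrow> real"
  assumes f: "continuous_on {0..pi} f" and sym: "\<And>t. f (pi - t) = f t"
  shows "integral {0..pi} f = 2 * integral {0..pi/2} f"
proof -
  have "((\<lambda>t. (-1) *\<^sub>R f (pi - t)) has_integral
          integral {pi - 0..pi - pi/2} f - integral {pi - pi/2..pi - 0} f) {0..pi/2}"
    by (rule has_integral_substitution_general[of "{}" 0 "pi/2" "\<lambda>t. pi - t" 0 pi f "\<lambda>_. -1"])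
       (auto intro!: derivative_eq_intros continuous_on_diff f)
  then have "((\<lambda>t. - f t) has_integral - integral {pi/2..pi} f) {0..pi/2}"
    using sym by simp
  then have "integral {0..pi/2} (\<lambda>t. - f t) = - integral {pi/2..pi} f"
    by (rule integral_unique)
  then have "integral {0..pi/2} f = integral {pi/2..pi} f"
    by (simp add: integral_neg)
  moreover have "integral {0..pi/2} f + integral {pi/2..pi} f = integral {0..pi} f"
    using f by (intro Henstock_Kurzweil_Integration.integral_combine integrable_continuous_interval) auto
  ultimately show ?thesis by simp
qed

lemma ellF_zero [simp]: "ellF m 0 = 0"
  by (simp add: ellF_def)

lemma ellF_pi: "m < 1 \<Longrightarrow> ellF m pi = 2 * ellK m"
  unfolding ellF_conv_integral_ell_weight[OF pi_ge_zero] ellK_conv_integral_ell_weight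
  by (rule integral_symmetric_about_pi_half[OF continuous_on_ell_weight]) (simp_all add: ell_weight_def)

lemma ellF_increment_ge:
  assumes "0 \<le> m" "m < 1" "0 \<le> p" "p \<le> q"
  shows "ellF m p + (q - p) \<le> ellF m q"
proof -
  have "integral {0..p} (ell_weight m) + integral {p..q} (ell_weight m) = integral {0..q} (ell_weight m)"
    using assms by (intro Henstock_Kurzweil_Integration.integral_combine ell_weight_integrable) auto
  then show ?thesis
    using integral_ell_weight_ge_length[of m p q] assms by (simp add: ellF_conv_integral_ell_weight)
qed

lemma ellF_neg:
  assumes "0 \<le> m" "m < 1" "p < 0"
  shows "ellF m p < 0"
  using integral_ell_weight_ge_length[of m p 0] assms by (simp add: ellF_def ell_weight_def[abs_def])

lemma jacobi_am_ellF:
  assumes m: "0 \<le> m" "m < 1" and "0 \<le> p"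
  shows "jacobi_am m (ellF m p) = p"
  unfolding jacobi_am_def
proof (rule the_equality)
  fix q assume q: "ellF m q = ellF m p"
  have "0 \<le> ellF m p"
    using ellF_increment_ge[OF m order.refl \<open>0 \<le> p\<close>] \<open>0 \<le> p\<close> by simp
  then have "0 \<le> q" using q by (metis ellF_neg[OF m] not_le)
  then show "q = p"
    using q ellF_increment_ge[OF m \<open>0 \<le> q\<close>, of p] ellF_increment_ge[OF m \<open>0 \<le> p\<close>, of q]
    by (cases "p \<le> q") auto
qed simp

lemma ellF_has_real_derivative:
  assumes "m < 1" "t \<in> {0..b}"
  shows "(ellF m has_real_derivative ell_weight m t) (at t within {0..b})"
proof -
  have "((\<lambda>p. integral {0..p} (ell_weight m)) has_real_derivative ell_weight m t) (at t within {0..b})"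
    using assms by (intro integral_has_real_derivative continuous_on_ell_weight)
  then show ?thesis
    by (rule has_field_derivative_transform_within[OF _ zero_less_one])
       (use assms in \<open>auto simp: ellF_conv_integral_ell_weight\<close>)
qed

lemma ellF_image_zero_pi:
  assumes "0 \<le> m" "m < 1"
  shows "ellF m ` {0..pi} = {0..2 * ellK m}"
proof
  show "ellF m ` {0..pi} \<subseteq> {0..2 * ellK m}"
    using ellF_increment_ge[OF assms, of 0] ellF_increment_ge[OF assms, of _ pi] ellF_pi[of m] assms
    by (force simp: ellF_def)
next
  have "continuous_on {0..pi} (ellF m)"
    using ellF_has_real_derivative assms by (intro DERIV_continuous_on) auto
  then show "{0..2 * ellK m} \<subseteq> ellF m ` {0..pi}"
    using IVT'[of "ellF m" 0 _ pi] ellF_pi[of m] assms by (force simp: ellF_def)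
qed

lemma continuous_on_jacobi_am:
  assumes "0 \<le> m" "m < 1"
  shows "continuous_on {0..2 * ellK m} (jacobi_am m)"
proof -
  have "continuous_on {0..pi} (ellF m)"
    using ellF_has_real_derivative assms by (intro DERIV_continuous_on) auto
  then show ?thesis
    using continuous_on_inv[of "{0..pi}" "ellF m" "jacobi_am m"] jacobi_am_ellF[OF assms]
      ellF_image_zero_pi[OF assms] by auto
qed

lemma has_integral_jacobi_sn_squared:
  assumes m: "0 \<le> m" "m < 1"
  defines "K \<equiv> ellK m"
  shows "((\<lambda>x. (jacobi_sn m (K / pi * x))^2) has_integral
           pi / K * integral {0..pi} (\<lambda>t. ell_weight m t * (sin t)^2)) {0..2*pi}"
proof -
  have K: "0 < K" using ellK_pos[OF m] by (simp add: K_def)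
  let ?sn2 = "\<lambda>x. (sin (jacobi_am m (K / pi * x)))^2"
  define g where "g t = pi / K * ellF m t" for t
  have g_deriv: "(g has_real_derivative pi / K * ell_weight m t) (at t within {0..pi})"
    if "t \<in> {0..pi}" for t
    unfolding g_def using m(2) that by (intro DERIV_cmult ellF_has_real_derivative)
  have g_ends: "g 0 = 0" "g pi = 2 * pi"
    using ellF_pi[OF m(2)] K by (simp_all add: g_def K_def)
  have g_image: "g ` {0..pi} \<subseteq> {0..2*pi}"
  proof -
    have "g ` {0..pi} = (\<lambda>y. pi / K * y) ` {0..2 * K}"
      unfolding g_def K_def ellF_image_zero_pi[OF m, symmetric] by (simp add: image_image)
    then show ?thesis using K by (auto simp: field_simps)
  qed
  have sn2_cont: "continuous_on {0..2*pi} ?sn2"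
  proof -
    have "(\<lambda>x. K / pi * x) ` {0..2*pi} \<subseteq> {0..2 * ellK m}"
      using K by (auto simp: K_def field_simps)
    then have "continuous_on {0..2*pi} (\<lambda>x. jacobi_am m (K / pi * x))"
      by (rule continuous_on_compose2[OF continuous_on_jacobi_am[OF m], rotated]) (intro continuous_intros)
    then show ?thesis by (intro continuous_intros)
  qed
  have "((\<lambda>t. (pi / K * ell_weight m t) *\<^sub>R ?sn2 (g t)) has_integral integral {0..2*pi} ?sn2) {0..pi}"
    using has_integral_substitution[OF _ _ g_image sn2_cont g_deriv] g_ends by simp
  moreover have "?sn2 (g t) = (sin t)^2" if "t \<in> {0..pi}" for t
    using jacobi_am_ellF[OF m, of t] that K by (simp add: g_def)
  ultimately have "((\<lambda>t. pi / K * (ell_weight m t * (sin t)^2)) has_integral integral {0..2*pi} ?sn2) {0..pi}"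
    by (subst has_integral_cong[symmetric]) (auto simp: algebra_simps)
  then have "integral {0..2*pi} ?sn2 = integral {0..pi} (\<lambda>t. pi / K * (ell_weight m t * (sin t)^2))"
    by (rule integral_unique[symmetric])
  also have "\<dots> = pi / K * integral {0..pi} (\<lambda>t. ell_weight m t * (sin t)^2)"
    by (rule integral_mult_right)
  finally have "integral {0..2*pi} ?sn2 = \<dots>" .
  then show ?thesis
    using integrable_integral[OF integrable_continuous_interval[OF sn2_cont]]
    by (simp add: jacobi_sn_def)
qed

lemma integral_ell_weight_sin_squared:
  assumes "m < 1"
  shows "m * integral {0..pi} (\<lambda>t. ell_weight m t * (sin t)^2) = 2 * (ellK m - ellE m)"
proof -
  have pointwise: "m * (ell_weight m t * (sin t)^2) = ell_weight m t - sqrt (1 - m * (sin t)^2)" for t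
  proof -
    have q: "0 < 1 - m * (sin t)^2" using elliptic_radicand_pos[OF assms] .
    then have "sqrt (1 - m * (sin t)^2) * sqrt (1 - m * (sin t)^2) = 1 - m * (sin t)^2" by simp
    then show ?thesis using q by (simp add: ell_weight_def field_simps)
  qed
  have "(\<lambda>t. sqrt (1 - m * (sin t)^2)) integrable_on {0..pi/2}"
    by (intro integrable_continuous_interval continuous_intros)
  then have "m * integral {0..pi/2} (\<lambda>t. ell_weight m t * (sin t)^2) = ellK m - ellE m"
    using ell_weight_integrable[OF assms]
    by (simp add: pointwise integral_diff ellK_conv_integral_ell_weight ellE_def
        flip: integral_mult_right)
  moreover have "integral {0..pi} (\<lambda>t. ell_weight m t * (sin t)^2)
      = 2 * integral {0..pi/2} (\<lambda>t. ell_weight m t * (sin t)^2)"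
    using assms by (intro integral_symmetric_about_pi_half continuous_intros continuous_on_ell_weight)
      (simp_all add: ell_weight_def)
  ultimately show ?thesis by simp
qed

lemma integral_cnoidal:
  assumes "0 \<le> m" "m < 1"
  shows "integral {0..2*pi} (cnoidal c m V) = c * (ellK m)^2 / (3 * pi) * (V - V0 m)"
proof -
  define K where "K = ellK m"
  define I where "I = integral {0..pi} (\<lambda>t. ell_weight m t * (sin t)^2)"
  define C where "C = c * K^2 / (3 * pi^2)"
  have K: "0 < K" using ellK_pos[OF assms] by (simp add: K_def)
  have "(cnoidal c m V has_integral C * (2 * pi * (V / 2 - (m + 1) / 3) + m * (pi / K * I))) {0..2*pi}"
    unfolding cnoidal_def C_def K_def I_def
    by (intro has_integral_mult_right has_integral_add has_integral_jacobi_sn_squared assms)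
       (use has_integral_const_real[of "V / 2 - (m + 1) / 3" 0 "2*pi"] in simp)
  then have "integral {0..2*pi} (cnoidal c m V) = C * (2 * pi * (V / 2 - (m + 1) / 3) + pi / K * (m * I))"
    by (simp add: integral_unique)
  also have "m * I = 2 * (K - ellE m)"
    unfolding I_def K_def using assms by (intro integral_ell_weight_sin_squared)
  also have "C * (2 * pi * (V / 2 - (m + 1) / 3) + pi / K * (2 * (K - ellE m)))
      = c * K^2 / (3 * pi) * (V - V0 m)"
    using K by (simp add: V0_def C_def K_def[symmetric] field_simps power2_eq_square)
  finally show ?thesis by (simp add: K_def)
qed

lemma integral_sin_squared_0_pi_half: "integral {0..pi/2} (\<lambda>t. (sin t)^2) = pi / 4"
proof -
  have "((\<lambda>t. t/2 - sin (2*t)/4) has_real_derivative (sin t)^2) (at t)" for t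
  proof -
    have "1/2 - cos (2*t) * 2 / 4 = (sin t)^2"
      using cos_double[of t] sin_cos_squared_add[of t] by linarith
    then show ?thesis by (auto intro!: derivative_eq_intros)
  qed
  then have "((\<lambda>t. (sin t)^2) has_integral (pi/2)/2 - sin (2*(pi/2))/4 - (0/2 - sin (2*0)/4)) {0..pi/2}"
    by (intro fundamental_theorem_of_calculus)
       (auto simp: has_real_derivative_iff_has_vector_derivative[symmetric] intro: has_field_derivative_at_within)
  then show ?thesis by (simp add: integral_unique)
qed

lemma two_mult_minus_inverse_diff_ge:
  fixes a b :: real
  assumes "0 < b" "b \<le> a" "a \<le> 1"
  shows "a^2 - b^2 \<le> (2*a - 1/a) - (2*b - 1/b)"
proof -
  have "(2*a - 1/a) - (2*b - 1/b) - (a^2 - b^2) = (a - b) * (2 - a - b) + (a - b) / (a * b)"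
    using assms by (simp add: field_simps power2_eq_square)
  moreover have "0 \<le> (a - b) * (2 - a - b)" "0 \<le> (a - b) / (a * b)"
    using assms by simp_all
  ultimately show ?thesis by linarith
qed

lemma two_ellE_minus_ellK_conv_integral:
  assumes "m < 1"
  shows "2 * ellE m - ellK m
    = integral {0..pi/2} (\<lambda>t. 2 * sqrt (1 - m * (sin t)^2) - ell_weight m t)"
proof -
  have "(\<lambda>t. 2 * sqrt (1 - m * (sin t)^2)) integrable_on {0..pi/2}"
    by (intro integrable_continuous_interval continuous_intros)
  then show ?thesis
    using ell_weight_integrable[OF assms]
    by (simp add: ellE_def ellK_conv_integral_ell_weight integral_diff)
qed

lemma two_ellE_minus_ellK_strict_decreasing:
  assumes "0 \<le> m1" "m1 < m2" "m2 < 1"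
  shows "2 * ellE m2 - ellK m2 < 2 * ellE m1 - ellK m1"
proof -
  define h where "h m t = 2 * sqrt (1 - m * (sin t)^2) - ell_weight m t" for m t
  have h_cont: "continuous_on S (h m)" if "m < 1" for m S
    unfolding h_def using that by (intro continuous_intros continuous_on_ell_weight)
  have h_diff: "(m2 - m1) * (sin t)^2 \<le> h m1 t - h m2 t" for t
  proof -
    define a where "a = sqrt (1 - m1 * (sin t)^2)"
    define b where "b = sqrt (1 - m2 * (sin t)^2)"
    have "0 \<le> (sin t)^2" "(sin t)^2 \<le> 1"
      using abs_sin_le_one[of t] by (simp_all add: abs_square_le_1)
    then have "m1 * (sin t)^2 \<le> m2 * (sin t)^2" "0 \<le> m1 * (sin t)^2"
      using assms by (simp_all add: mult_right_mono)
    moreover have "0 < 1 - m2 * (sin t)^2" using elliptic_radicand_pos assms by simp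
    ultimately have "0 < b" "b \<le> a" "a \<le> 1" "a^2 - b^2 = (m2 - m1) * (sin t)^2"
      unfolding a_def b_def by (simp_all add: algebra_simps)
    then show ?thesis
      using two_mult_minus_inverse_diff_ge[of b a] by (simp add: h_def ell_weight_def a_def b_def)
  qed
  have "(m2 - m1) * (pi / 4) = integral {0..pi/2} (\<lambda>t. (m2 - m1) * (sin t)^2)"
    by (simp add: integral_sin_squared_0_pi_half)
  also have "\<dots> \<le> integral {0..pi/2} (\<lambda>t. h m1 t - h m2 t)"
    using assms h_diff
    by (intro integral_le integrable_continuous_interval continuous_intros h_cont) auto
  also have "\<dots> = (2 * ellE m1 - ellK m1) - (2 * ellE m2 - ellK m2)"
    using assms h_cont
    by (simp add: two_ellE_minus_ellK_conv_integral h_def[abs_def] integral_diff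
        integrable_continuous_interval)
  finally have "(m2 - m1) * (pi / 4) \<le> (2 * ellE m1 - ellK m1) - (2 * ellE m2 - ellK m2)" .
  moreover have "0 < (m2 - m1) * (pi / 4)" using assms by simp
  ultimately show ?thesis by linarith
qed

lemma continuous_on_ellK: "continuous_on {..<1} ellK"
proof -
  have "continuous_on ({..<1} \<times> cbox 0 (pi/2)) (\<lambda>z. 1 / sqrt (1 - fst z * (sin (snd z))^2))"
  proof (intro continuous_intros ballI)
    fix z :: "real \<times> real" assume "z \<in> {..<1} \<times> cbox 0 (pi/2)"
    then show "sqrt (1 - fst z * (sin (snd z))^2) \<noteq> 0"
      using elliptic_radicand_pos[of "fst z" "snd z"] by auto
  qed
  then show ?thesis
    unfolding ellK_def[abs_def] cbox_interval[symmetric]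
    by (intro integral_continuous_on_param) (simp add: case_prod_beta')
qed

lemma continuous_on_ellE: "continuous_on S ellE"
proof -
  have "continuous_on (S \<times> cbox 0 (pi/2)) (\<lambda>z. sqrt (1 - fst z * (sin (snd z))^2))"
    by (intro continuous_intros)
  then show ?thesis
    unfolding ellE_def[abs_def] cbox_interval[symmetric]
    by (intro integral_continuous_on_param) (simp add: case_prod_beta')
qed

lemma ellE_le_pi_half:
  assumes "0 \<le> m"
  shows "ellE m \<le> pi / 2"
proof -
  have "integral {0..pi/2} (\<lambda>t. sqrt (1 - m * (sin t)^2)) \<le> integral {0..pi/2} (\<lambda>t. 1)"
    using assms
    by (intro integral_le integrable_continuous_interval continuous_intros) auto
  then show ?thesis by (simp add: ellE_def)
qed

lemma one_minus_mult_ellK_le_ellE: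
  assumes "0 \<le> m" "m < 1"
  shows "(1 - m) * ellK m \<le> ellE m"
proof -
  have "(1 - m) * ell_weight m t \<le> sqrt (1 - m * (sin t)^2)" for t
  proof -
    have q: "0 < 1 - m * (sin t)^2" using elliptic_radicand_pos assms by simp
    have "1 - m \<le> 1 - m * (sin t)^2"
      using assms abs_sin_le_one[of t] by (simp add: mult_left_le abs_square_le_1)
    also have "\<dots> = sqrt (1 - m * (sin t)^2) * sqrt (1 - m * (sin t)^2)" using q by simp
    finally show ?thesis using q by (simp add: ell_weight_def divide_simps)
  qed
  then have "integral {0..pi/2} (\<lambda>t. (1 - m) * ell_weight m t)
      \<le> integral {0..pi/2} (\<lambda>t. sqrt (1 - m * (sin t)^2))"
    using assms
    by (intro integral_le integrable_continuous_interval continuous_intros continuous_on_ell_weight)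
  then show ?thesis by (simp add: ellE_def ellK_conv_integral_ell_weight)
qed

lemma ellK_ge_artanh:
  fixes r :: real
  assumes r: "0 < r" "r < 1"
  shows "artanh r / r \<le> ellK (r^2)"
proof -
  have m: "r^2 < 1" using r by (simp add: power_less_one_iff)
  have q: "0 < 1 - r^2 * (sin t)^2" for t using elliptic_radicand_pos[OF m] .
  have "((\<lambda>t. artanh (r * sin t) / r) has_real_derivative cos t / (1 - r^2 * (sin t)^2)) (at t)" for t
  proof -
    have "(r * sin t)^2 < 1" using q[of t] by (simp add: power_mult_distrib)
    then have "\<bar>r * sin t\<bar> < 1" by (simp add: abs_square_less_1)
    then have "((\<lambda>t. artanh (r * sin t)) has_real_derivative
        1 / (1 - (r * sin t)^2) * (r * cos t)) (at t)"
      by (intro DERIV_chain2[OF artanh_real_has_field_derivative]) (auto intro!: derivative_eq_intros)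
    then have "((\<lambda>t. artanh (r * sin t) / r) has_real_derivative
        1 / (1 - (r * sin t)^2) * (r * cos t) / r) (at t)"
      by (rule DERIV_cdivide)
    then show ?thesis using r by (simp add: power_mult_distrib)
  qed
  then have "((\<lambda>t. cos t / (1 - r^2 * (sin t)^2)) has_integral artanh r / r) {0..pi/2}"
    using fundamental_theorem_of_calculus[of 0 "pi/2" "\<lambda>t. artanh (r * sin t) / r"]
    by (simp add: has_real_derivative_iff_has_vector_derivative[symmetric] has_field_derivative_at_within)
  moreover have "cos t / (1 - r^2 * (sin t)^2) \<le> ell_weight (r^2) t" if "t \<in> {0..pi/2}" for t
  proof -
    have "r^2 * (sin t)^2 \<le> (sin t)^2"
      using m by (simp add: mult_left_le_one_le)
    then have "(cos t)^2 \<le> 1 - r^2 * (sin t)^2"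
      using sin_cos_squared_add[of t] by linarith
    then have "cos t \<le> sqrt (1 - r^2 * (sin t)^2)"
      using that by (intro real_le_rsqrt) (auto intro: cos_ge_zero)
    then have "cos t / (1 - r^2 * (sin t)^2) \<le> sqrt (1 - r^2 * (sin t)^2) / (1 - r^2 * (sin t)^2)"
      using q[of t] by (simp add: divide_right_mono)
    then show ?thesis
      using q[of t] by (simp add: ell_weight_def sqrt_divide_self_eq inverse_eq_divide)
  qed
  ultimately show ?thesis
    unfolding ellK_conv_integral_ell_weight
    by (rule has_integral_le[OF _ integrable_integral[OF ell_weight_integrable[OF m]]])
qed

lemma ellK_gt_pi_near_one: "pi < ellK ((9999/10000)^2)"
proof -
  have "exp (9::real) \<le> 3 ^ 9"
    using power_mono[OF exp_le, of 9] exp_of_nat_mult[of 9 "1::real"] by simp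
  then have "9 \<le> ln (19999::real)"
    by (simp add: ln_ge_iff)
  then have "9 / 2 \<le> artanh (9999/10000::real) / (9999/10000)"
    by (simp add: artanh_def)
  also have "\<dots> \<le> ellK ((9999/10000)^2)"
    by (rule ellK_ge_artanh) simp_all
  finally show ?thesis using pi_less_4 by simp
qed

lemma ellE_div_ellK_eq_half_iff:
  "0 \<le> m \<Longrightarrow> m < 1 \<Longrightarrow> ellE m / ellK m = 1/2 \<longleftrightarrow> 2 * ellE m - ellK m = 0"
  using ellK_pos[of m] by (auto simp: field_simps)

lemma two_ellE_minus_ellK_eq_zero_iff:
  assumes "0 \<le> ms" "ms < 1" "2 * ellE ms - ellK ms = 0" and "0 \<le> m" "m < 1"
  shows "2 * ellE m - ellK m = 0 \<longleftrightarrow> m = ms"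
  using two_ellE_minus_ellK_strict_decreasing[of m ms] two_ellE_minus_ellK_strict_decreasing[of ms m]
    assms by (cases m ms rule: linorder_cases) auto

lemma ex1_ellE_div_ellK_eq_half: "\<exists>!ms. 0 < ms \<and> ms < 1 \<and> ellE ms / ellK ms = 1/2"
proof -
  define g where "g m = 2 * ellE m - ellK m" for m
  define b :: real where "b = (9999/10000)^2"
  have b: "0 < b" "b < 1" by (simp_all add: b_def power2_eq_square)
  have "g 0 > 0" by (simp add: g_def ellE_def ellK_def)
  moreover have "g b < 0"
    using ellE_le_pi_half[of b] ellK_gt_pi_near_one b by (simp add: g_def b_def)
  moreover have "continuous_on {0..b} g"
    unfolding g_def using b
    by (intro continuous_intros continuous_on_ellE continuous_on_subset[OF continuous_on_ellK]) auto
  ultimately obtain ms where ms: "0 < ms" "ms < b" "g ms = 0"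
    using IVT2'[of g b 0 0] b by (metis atLeastAtMost_iff less_eq_real_def less_irrefl)
  show ?thesis
  proof (rule ex1I)
    show "0 < ms \<and> ms < 1 \<and> ellE ms / ellK ms = 1/2"
      using ms b ellE_div_ellK_eq_half_iff[of ms] by (simp add: g_def)
  next
    fix m assume "0 < m \<and> m < 1 \<and> ellE m / ellK m = 1/2"
    then show "m = ms"
      using two_ellE_minus_ellK_eq_zero_iff[of ms m] ellE_div_ellK_eq_half_iff[of m] ms b
      by (simp add: g_def)
  qed
qed

lemma V0_minus_critical_line:
  "0 \<le> m \<Longrightarrow> m < 1 \<Longrightarrow> V0 m - (2 * m - 1) / 3 = (2 * ellE m - ellK m) / ellK m"
  using ellK_pos[of m] by (simp add: V0_def field_simps)

lemma V0_gt_lower_line: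
  assumes "0 \<le> m" "m < 1"
  shows "- (m + 1) / 3 < V0 m"
proof -
  have "0 < (1 - m) * ellK m"
    using ellK_pos[OF assms] assms by simp
  then have "(1 - m) * ellK m < 2 * ellE m"
    using one_minus_mult_ellK_le_ellE[OF assms] by linarith
  then show ?thesis
    using ellK_pos[OF assms] by (simp add: V0_def field_simps)
qed

lemma V0_eq_critical_line_iff:
  assumes "0 \<le> ms" "ms < 1" "ellE ms / ellK ms = 1/2" and m: "0 \<le> m" "m < 1"
  shows "V0 m = (2 * m - 1) / 3 \<longleftrightarrow> m = ms"
proof -
  have "V0 m = (2 * m - 1) / 3 \<longleftrightarrow> (2 * ellE m - ellK m) / ellK m = 0"
    using V0_minus_critical_line[OF m] by linarith
  also have "\<dots> \<longleftrightarrow> 2 * ellE m - ellK m = 0"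
    using ellK_pos[OF m] by simp
  also have "\<dots> \<longleftrightarrow> m = ms"
    using assms ellE_div_ellK_eq_half_iff[of ms] by (intro two_ellE_minus_ellK_eq_zero_iff) auto
  finally show ?thesis .
qed

lemma V0_below_critical_line:
  assumes "0 \<le> ms" "ms < 1" "ellE ms / ellK ms = 1/2" and "ms < m" "m < 1"
  shows "V0 m < (2 * m - 1) / 3"
proof -
  have m: "0 \<le> m" "m < 1" using assms by auto
  have "2 * ellE m - ellK m < 2 * ellE ms - ellK ms"
    using assms by (intro two_ellE_minus_ellK_strict_decreasing)
  also have "\<dots> = 0" using assms ellE_div_ellK_eq_half_iff by blast
  finally have "(2 * ellE m - ellK m) / ellK m < 0"
    using ellK_pos[OF m] by (rule divide_neg_pos)
  then show ?thesis
    using V0_minus_critical_line[OF m] by linarith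
qed

theorem mainTheorem8:
  fixes c :: real
  assumes "c \<noteq> 0"
  shows "(\<forall>m V. 0 \<le> m \<and> m < 1 \<longrightarrow>
            (integral {0..2*pi} (cnoidal c m V) = 0 \<longleftrightarrow> V = V0 m))
       \<and> (\<exists>!ms. 0 < ms \<and> ms < 1 \<and> ellE ms / ellK ms = 1/2)
       \<and> (\<forall>m. 0 \<le> m \<and> m < 1 \<longrightarrow> V0 m > - (m + 1) / 3)
       \<and> (\<forall>ms. 0 < ms \<and> ms < 1 \<and> ellE ms / ellK ms = 1/2 \<longrightarrow>
            (\<forall>m. 0 \<le> m \<and> m < 1 \<longrightarrow> (V0 m = (2 * m - 1) / 3 \<longleftrightarrow> m = ms))
          \<and> (\<forall>m. ms < m \<and> m < 1 \<longrightarrow> V0 m < (2 * m - 1) / 3))"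
proof (intro conjI allI impI)
  fix m V :: real assume "0 \<le> m \<and> m < 1"
  then show "integral {0..2*pi} (cnoidal c m V) = 0 \<longleftrightarrow> V = V0 m"
    using assms ellK_pos[of m] by (simp add: integral_cnoidal)
next
  show "\<exists>!ms. 0 < ms \<and> ms < 1 \<and> ellE ms / ellK ms = 1/2"
    by (rule ex1_ellE_div_ellK_eq_half)
next
  fix m :: real assume "0 \<le> m \<and> m < 1"
  then show "V0 m > - (m + 1) / 3" using V0_gt_lower_line by blast
next
  fix ms m :: real
  assume "0 < ms \<and> ms < 1 \<and> ellE ms / ellK ms = 1/2"
  then show "0 \<le> m \<and> m < 1 \<Longrightarrow> V0 m = (2 * m - 1) / 3 \<longleftrightarrow> m = ms"
    and "ms < m \<and> m < 1 \<Longrightarrow> V0 m < (2 * m - 1) / 3"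
    using V0_eq_critical_line_iff[of ms m] V0_below_critical_line[of ms m] by auto
qed

end
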